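(* Let $f:\mathbb{R}^n\to\mathbb{R}\cup\{+\infty\}$ be a polyhedral M-convex function with bounded $\operatorname{dom}_{\mathbb{R}} f$, and $x\in\operatorname{dom}_{\mathbb{R}} f$ with $\phi_{\mathbb{R}}(x)<0$. Consider the procedure PM-IncSlope$(x)$: set $y:=x$; for each $i\in N$ (each exactly once, arbitrary order) and, for this $i$, for each $j\in N\setminus\{i\}$ (each exactly once, arbitrary order), if $f'_{\mathbb{R}}(y;i,j)=\phi_{\mathbb{R}}(x)$ then replace $y$ by $y+\bar c_{\mathbb{R}}(y;i,j)(\chi_i-\chi_j)$; finally output $x':=y$. Then $\phi_{\mathbb{R}}(x')>\phi_{\mathbb{R}}(x)$.
   Context: $N=\{1,\dots,n\}$; $\chi_i$ is the $i$-th unit vector. $\operatorname{dom}_{\mathbb{R}} f=\{x\in\mathbb{R}^n:f(x)<+\infty\}$. A polyhedral convex function $f:\mathbb{R}^n\to\mathbb{R}\cup\{+\infty\}$ (epigraph a polyhedron, $\operatorname{dom}_{\mathbb{R}} f\neq\emptyset$) is M-convex if for all $x,y\in\operatorname{dom}_{\mathbb{R}} f$ and every $i$ with $x(i)>y(i)$ there exist $j$ with $x(j)<y(j)$ and $\epsilon_0>0$ such that $f(x)+f(y)\ge f(x-\epsilon(\chi_i-\chi_j))+f(y+\epsilon(\chi_i-\chi_j))$ for all $\epsilon\in[0,\epsilon_0]$. For $x\in\operatorname{dom}_{\mathbb{R}} f$, $f'_{\mathbb{R}}(x;i,j)=\lim_{\alpha\downarrow0}(f(x+\alpha(\chi_i-\chi_j))-f(x))/\alpha$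 (possibly $+\infty$), $\phi_{\mathbb{R}}(x)=\min_{i,j\in N}f'_{\mathbb{R}}(x;i,j)$, and for finite $f'_{\mathbb{R}}(x;i,j)$, $\bar c_{\mathbb{R}}(x;i,j)=\max\{\lambda\ge0: f(x+\lambda(\chi_i-\chi_j))-f(x)=\lambda f'_{\mathbb{R}}(x;i,j)\}$. *)

theory Defs
  imports "HOL-Analysis.Analysis"
begin

text \<open>Functions R^n -> R \<union> {+\<infinity>} are modelled as ereal-valued functions on
  real^'n (index set N = UNIV :: 'n set) that never take the value -\<infinity>.\<close>

definition dom_R :: "(real^'n \<Rightarrow> ereal) \<Rightarrow> (real^'n) set" where
  "dom_R f = {x. f x < \<infinity>}"

definition chi :: "'n::finite \<Rightarrow> real^'n" where
  "chi i = axis i 1"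

definition epigraph :: "(real^'n \<Rightarrow> ereal) \<Rightarrow> ((real^'n) \<times> real) set" where
  "epigraph f = {(x, t). f x \<le> ereal t}"

definition polyhedral_convex :: "(real^'n::finite \<Rightarrow> ereal) \<Rightarrow> bool" where
  "polyhedral_convex f \<longleftrightarrow> (\<forall>x. f x \<noteq> -\<infinity>) \<and> polyhedron (epigraph f) \<and> dom_R f \<noteq> {}"

definition M_convex :: "(real^'n::finite \<Rightarrow> ereal) \<Rightarrow> bool" where
  "M_convex f \<longleftrightarrow> polyhedral_convex f \<and>
     (\<forall>x\<in>dom_R f. \<forall>y\<in>dom_R f. \<forall>i. x$i > y$i \<longrightarrow>
        (\<exists>j. x$j < y$j \<and> (\<exists>\<epsilon>0>0. \<forall>\<epsilon>\<in>{0..\<epsilon>0}.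
           f x + f y \<ge> f (x - \<epsilon> *\<^sub>R (chi i - chi j)) + f (y + \<epsilon> *\<^sub>R (chi i - chi j)))))"

definition dderiv :: "(real^'n::finite \<Rightarrow> ereal) \<Rightarrow> real^'n \<Rightarrow> 'n \<Rightarrow> 'n \<Rightarrow> ereal" where
  "dderiv f x i j = Lim (at_right 0)
     (\<lambda>\<alpha>::real. (f (x + \<alpha> *\<^sub>R (chi i - chi j)) - f x) / ereal \<alpha>)"

definition phi :: "(real^'n::finite \<Rightarrow> ereal) \<Rightarrow> real^'n \<Rightarrow> ereal" where
  "phi f x = Min {dderiv f x i j | i j. True}"

definition cbar :: "(real^'n::finite \<Rightarrow> ereal) \<Rightarrow> real^'n \<Rightarrow> 'n \<Rightarrow> 'n \<Rightarrow> real" where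
  "cbar f x i j = (GREATEST lam::real. lam \<ge> 0 \<and>
       f (x + lam *\<^sub>R (chi i - chi j)) - f x = ereal lam * dderiv f x i j)"

definition pm_step :: "(real^'n::finite \<Rightarrow> ereal) \<Rightarrow> ereal \<Rightarrow> real^'n \<Rightarrow> 'n \<times> 'n \<Rightarrow> real^'n" where
  "pm_step f th y ij = (case ij of (i, j) \<Rightarrow>
     if dderiv f y i j = th then y + cbar f y i j *\<^sub>R (chi i - chi j) else y)"

definition pm_incslope :: "(real^'n::finite \<Rightarrow> ereal) \<Rightarrow> 'n list \<Rightarrow> ('n \<Rightarrow> 'n list) \<Rightarrow> real^'n \<Rightarrow> real^'n" where
  "pm_incslope f ois js x =
     foldl (pm_step f (phi f x)) x (concat (map (\<lambda>i. map (\<lambda>j. (i, j)) (js i)) ois))"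

end

theory Submission
  imports Defs
begin

text \<open>
  A polyhedral convex function is the maximum of finitely many affine functions on a polyhedron,
  so along every ray it is affine near the start and lies above this initial piece.
  The key estimate: if every slope f'(y;i,j) is at least ph \<le> 0, then
  f z \<ge> f y + ph |z - y|_1 / 2 for all z. Among the points w of the box spanned by y and z with
  f w + ph |z - w|_1 / 2 \<le> f z, the one nearest to y is y itself, since an M-convex exchange
  step from w towards y stays in that set and shortens the distance. The bound is strict when the
  exchange from z towards y can be made in a direction whose slope at y exceeds ph.
  Consequently a step of maximal length c-bar along a steepest direction (i,j) keeps all slopes
  \<ge> ph = phi x, makes the slope along (i,j) exceed ph, and preserves strictness in the rows
  treated before and in the directions (i,k) treated before in the current row.
\<close>

lemma chi_nth [simp]: "chi i $ k = (if k = i then 1 else 0)"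
  by (simp add: chi_def axis_def)

definition poly_set :: "((real^'n::finite) \<times> real) set \<Rightarrow> (real^'n) set" where
  "poly_set C = {x. \<forall>(a, b)\<in>C. a \<bullet> x \<le> b}"

definition max_affine :: "((real^'n::finite) \<times> real) set \<Rightarrow> real^'n \<Rightarrow> real" where
  "max_affine C x = Max ((\<lambda>(a, b). a \<bullet> x + b) ` C)"

lemma closed_poly_set: "closed (poly_set C)"
proof -
  have "poly_set C = (\<Inter>ab\<in>C. {x. fst ab \<bullet> x \<le> snd ab})"
    unfolding poly_set_def by fastforce
  then show ?thesis by (auto intro!: closed_INT closed_halfspace_le)
qed

lemma max_affine_le_iff:
  assumes "finite C" "C \<noteq> {}"
  shows "max_affine C x \<le> t \<longleftrightarrow> (\<forall>(a, b)\<in>C. a \<bullet> x + b \<le> t)"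
  using assms by (auto simp: max_affine_def)

lemma max_affine_ge:
  assumes "finite C" "(a, b) \<in> C"
  shows "a \<bullet> x + b \<le> max_affine C x"
  using assms unfolding max_affine_def by (auto intro!: Max_ge)

lemma convex_on_max_affine:
  assumes "finite C" "C \<noteq> {}"
  shows "convex_on UNIV (max_affine C)"
proof (rule convex_onI)
  fix t :: real and x y
  assume t: "0 < t" "t < 1"
  show "max_affine C ((1 - t) *\<^sub>R x + t *\<^sub>R y) \<le> (1 - t) * max_affine C x + t * max_affine C y"
    unfolding max_affine_le_iff[OF assms]
  proof clarify
    fix a b assume ab: "(a, b) \<in> C"
    have "(1 - t) * (a \<bullet> x + b) + t * (a \<bullet> y + b) \<le> (1 - t) * max_affine C x + t * max_affine C y"
      using t max_affine_ge[OF assms(1) ab] by (intro add_mono mult_left_mono) auto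
    then show "a \<bullet> ((1 - t) *\<^sub>R x + t *\<^sub>R y) + b \<le> (1 - t) * max_affine C x + t * max_affine C y"
      by (simp add: inner_add_right algebra_simps)
  qed
qed simp

lemma continuous_on_max_affine:
  assumes "finite C" "C \<noteq> {}" "continuous_on S g"
  shows "continuous_on S (\<lambda>x. max_affine C (g x))"
  using continuous_on_compose2[OF convex_on_continuous[OF open_UNIV convex_on_max_affine[OF assms(1,2)]] assms(3)]
  by simp

lemma ereal_eq_if_le_iff:
  assumes "\<And>t. u \<le> ereal t \<longleftrightarrow> Q \<and> m \<le> t"
  shows "u = (if Q then ereal m else \<infinity>)"
proof (cases Q)
  case True
  have "u \<le> ereal m" using assms True by simp
  moreover have "ereal m \<le> u"
    by (rule ereal_le_real) (use assms True in auto)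
  ultimately show ?thesis using True by simp
next
  case False
  then show ?thesis
    using assms[of 0] assms[of "real_of_ereal u"] by (cases u) auto
qed

lemma epigraph_inequality_system:
  fixes f :: "real^'n::finite \<Rightarrow> ereal"
  assumes "polyhedron (epigraph f)"
  obtains C :: "(((real^'n) \<times> real) \<times> real) set"
  where "finite C" "\<And>x t. f x \<le> ereal t \<longleftrightarrow> (\<forall>(a, b)\<in>C. fst a \<bullet> x + snd a * t \<le> b)"
proof -
  obtain F where F: "finite F" "epigraph f = \<Inter>F"
    and halfspaces: "\<forall>h\<in>F. \<exists>a b. a \<noteq> 0 \<and> h = {x. a \<bullet> x \<le> b}"
    using assms unfolding polyhedron_def by blast
  have "\<forall>h\<in>F. \<exists>ab. h = {p. fst ab \<bullet> p \<le> snd ab}" using halfspaces by force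
  then obtain g where g: "\<And>h. h \<in> F \<Longrightarrow> h = {p. fst (g h) \<bullet> p \<le> snd (g h)}" by metis
  have sys: "f x \<le> ereal t \<longleftrightarrow> (\<forall>(a, b)\<in>g ` F. fst a \<bullet> x + snd a * t \<le> b)" for x t
  proof -
    have "f x \<le> ereal t \<longleftrightarrow> (x, t) \<in> \<Inter>F" using F(2) unfolding epigraph_def by blast
    also have "\<dots> \<longleftrightarrow> (\<forall>h\<in>F. fst (g h) \<bullet> (x, t) \<le> snd (g h))" using g by blast
    finally show ?thesis by (simp add: inner_prod_def split_def)
  qed
  show ?thesis by (rule that[OF _ sys]) (simp add: F(1))
qed

lemma epigraph_inequality_nonpos:
  assumes sys: "\<And>x t. f x \<le> ereal t \<longleftrightarrow> (\<forall>(a, b)\<in>C. fst a \<bullet> x + snd a * t \<le> b)"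
    and fy: "f y = ereal r" and ab: "(a, b) \<in> C"
  shows "snd a \<le> 0"
proof (rule ccontr)
  assume "\<not> snd a \<le> 0"
  then have pos: "snd a > 0" by simp
  define t where "t = max r ((b - fst a \<bullet> y) / snd a + 1)"
  have "fst a \<bullet> y + snd a * t \<le> b"
    using sys[of y t] fy ab by (auto simp: t_def)
  moreover have "snd a * ((b - fst a \<bullet> y) / snd a + 1) \<le> snd a * t"
    using pos by (intro mult_left_mono) (auto simp: t_def)
  moreover have "snd a * ((b - fst a \<bullet> y) / snd a + 1) = b - fst a \<bullet> y + snd a"
    using pos by (simp add: field_simps)
  ultimately show False using pos by linarith
qed

lemma affine_le_iff_solve:
  fixes a :: "'a::real_inner"
  assumes "c < 0"
  shows "a \<bullet> x + c * t \<le> b \<longleftrightarrow> (-1 / c) *\<^sub>R a \<bullet> x + b / c \<le> t"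
proof -
  have "a \<bullet> x + c * t \<le> b \<longleftrightarrow> (b - a \<bullet> x) / c \<le> t"
    using assms by (simp add: divide_le_eq algebra_simps)
  also have "(b - a \<bullet> x) / c = (-1 / c) *\<^sub>R a \<bullet> x + b / c"
    by (simp add: field_simps add_divide_distrib[symmetric])
  finally show ?thesis .
qed

lemma polyhedral_convex_max_affine_repr:
  fixes f :: "real^'n::finite \<Rightarrow> ereal"
  assumes "polyhedral_convex f"
  obtains C0 C1 where "finite C0" "finite C1" "C1 \<noteq> {}"
    "\<And>x. f x = (if x \<in> poly_set C0 then ereal (max_affine C1 x) else \<infinity>)"
proof -
  have not_MInf: "\<And>x. f x \<noteq> -\<infinity>" and "polyhedron (epigraph f)" and "dom_R f \<noteq> {}"
    using assms unfolding polyhedral_convex_def by auto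
  obtain C where "finite C"
    and sys: "\<And>x t. f x \<le> ereal t \<longleftrightarrow> (\<forall>(a, b)\<in>C. fst a \<bullet> x + snd a * t \<le> b)"
    using epigraph_inequality_system[OF \<open>polyhedron (epigraph f)\<close>] by blast
  obtain y r where fy: "f y = ereal r"
    using \<open>dom_R f \<noteq> {}\<close> not_MInf unfolding dom_R_def by (metis empty_Collect_eq less_ereal.simps(2) real_of_ereal.elims)
  define C0 where "C0 = (\<lambda>(a, b). (fst a, b)) ` {(a, b)\<in>C. snd a = 0}"
  define C1 where "C1 = (\<lambda>(a, b). ((-1 / snd a) *\<^sub>R fst a, b / snd a)) ` {(a, b)\<in>C. snd a < 0}"
  have fin: "finite C0" "finite C1"
    unfolding C0_def C1_def using \<open>finite C\<close> by (auto intro: finite_subset)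
  have solve: "fst a \<bullet> x + snd a * t \<le> b \<longleftrightarrow> (-1 / snd a) *\<^sub>R fst a \<bullet> x + b / snd a \<le> t"
    if "snd a < 0" for a :: "(real^'n) \<times> real" and b x t
    using affine_le_iff_solve[OF that] .
  have sublevel: "f x \<le> ereal t \<longleftrightarrow> x \<in> poly_set C0 \<and> (\<forall>(a, b)\<in>C1. a \<bullet> x + b \<le> t)" for x t
  proof -
    have "f x \<le> ereal t \<longleftrightarrow> (\<forall>(a, b)\<in>C. snd a = 0 \<longrightarrow> fst a \<bullet> x \<le> b) \<and>
                              (\<forall>(a, b)\<in>C. snd a < 0 \<longrightarrow> fst a \<bullet> x + snd a * t \<le> b)"
      using sys epigraph_inequality_nonpos[OF sys fy] by force
    also have "\<dots> \<longleftrightarrow> x \<in> poly_set C0 \<and> (\<forall>(a, b)\<in>C1. a \<bullet> x + b \<le> t)"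
      unfolding poly_set_def C0_def C1_def using solve by (auto split: prod.splits)
    finally show ?thesis .
  qed
  have "C1 \<noteq> {}"
  proof
    assume "C1 = {}"
    then have "f y \<le> ereal t" for t using sublevel[of y] sublevel[of y r] fy by simp
    then have "f y = -\<infinity>" by (rule ereal_bot)
    with not_MInf show False by simp
  qed
  moreover have "f x = (if x \<in> poly_set C0 then ereal (max_affine C1 x) else \<infinity>)" for x
    by (rule ereal_eq_if_le_iff) (simp add: sublevel max_affine_le_iff fin \<open>C1 \<noteq> {}\<close>)
  ultimately show ?thesis using fin by (intro that)
qed

lemma poly_set_ray_feasible:
  assumes "finite C" "x \<in> poly_set C"
    and active: "\<And>a b. (a, b) \<in> C \<Longrightarrow> a \<bullet> x = b \<Longrightarrow> a \<bullet> d \<le> 0"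
  obtains \<delta> where "\<delta> > 0" "\<And>\<alpha>. \<alpha> \<in> {0..\<delta>} \<Longrightarrow> x + \<alpha> *\<^sub>R d \<in> poly_set C"
proof -
  define g where "g = (\<lambda>(a, b). if a \<bullet> d \<le> 0 then 1 else (b - a \<bullet> x) / (a \<bullet> d))"
  define \<delta> where "\<delta> = Min (insert 1 (g ` C))"
  have "g ab > 0" if "ab \<in> C" for ab
  proof -
    obtain a b where ab: "ab = (a, b)" by (cases ab)
    have "a \<bullet> x \<le> b" using assms(2) that ab unfolding poly_set_def by auto
    moreover have "a \<bullet> d > 0 \<Longrightarrow> a \<bullet> x \<noteq> b" using active that ab by force
    ultimately show ?thesis using ab by (auto simp: g_def)
  qed
  then have "\<delta> > 0" unfolding \<delta>_def using assms(1) by (subst Min_gr_iff) auto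
  moreover have "x + \<alpha> *\<^sub>R d \<in> poly_set C" if \<alpha>: "\<alpha> \<in> {0..\<delta>}" for \<alpha>
    unfolding poly_set_def
  proof clarify
    fix a b assume ab: "(a, b) \<in> C"
    have ax: "a \<bullet> x \<le> b" using assms(2) ab unfolding poly_set_def by auto
    have "\<alpha> \<le> g (a, b)" using \<alpha> ab assms(1) unfolding \<delta>_def by (auto intro: order.trans[OF _ Min_le])
    have "\<alpha> * (a \<bullet> d) \<le> b - a \<bullet> x"
    proof (cases "a \<bullet> d \<le> 0")
      case True
      then show ?thesis using \<alpha> ax mult_nonneg_nonpos[of \<alpha> "a \<bullet> d"] by simp
    next
      case False
      then show ?thesis using \<open>\<alpha> \<le> g (a, b)\<close> by (simp add: g_def le_divide_eq)
    qed
    then show "a \<bullet> (x + \<alpha> *\<^sub>R d) \<le> b" by (simp add: inner_add_right)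
  qed
  ultimately show ?thesis using that by blast
qed

lemma poly_set_ray_cases:
  assumes "finite C" "x \<in> poly_set C"
  obtains (leaves) "\<And>\<alpha>. \<alpha> > 0 \<Longrightarrow> x + \<alpha> *\<^sub>R d \<notin> poly_set C"
    | (stays) \<delta> where "\<delta> > 0" "\<And>\<alpha>. \<alpha> \<in> {0..\<delta>} \<Longrightarrow> x + \<alpha> *\<^sub>R d \<in> poly_set C"
proof (cases "\<exists>(a, b)\<in>C. a \<bullet> x = b \<and> a \<bullet> d > 0")
  case True
  then obtain a b where ab: "(a, b) \<in> C" "a \<bullet> x = b" "a \<bullet> d > 0" by auto
  have "x + \<alpha> *\<^sub>R d \<notin> poly_set C" if "\<alpha> > 0" for \<alpha>
  proof
    assume "x + \<alpha> *\<^sub>R d \<in> poly_set C"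
    then have "a \<bullet> (x + \<alpha> *\<^sub>R d) \<le> b" using ab unfolding poly_set_def by auto
    then show False using ab mult_pos_pos[OF that ab(3)] by (simp add: inner_add_right)
  qed
  then show ?thesis using leaves by blast
next
  case False
  then have "\<And>a b. (a, b) \<in> C \<Longrightarrow> a \<bullet> x = b \<Longrightarrow> a \<bullet> d \<le> 0" by auto
  then obtain \<delta> where "\<delta> > 0" "\<And>\<alpha>. \<alpha> \<in> {0..\<delta>} \<Longrightarrow> x + \<alpha> *\<^sub>R d \<in> poly_set C"
    using poly_set_ray_feasible[OF assms] by blast
  then show ?thesis by (rule stays)
qed

lemma Max_affine_eventually_linear:
  fixes A :: "(real \<times> real) set"
  assumes "finite A" "A \<noteq> {}"
  shows "\<exists>\<delta>>0. \<exists>s. \<forall>\<alpha>\<in>{0..\<delta>}. Max ((\<lambda>(p, q). p + q * \<alpha>) ` A) = Max (fst ` A) + \<alpha> * s"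
  using assms
proof (induction A rule: finite_ne_induct)
  case (singleton x)
  show ?case by (rule exI[of _ 1]) (auto simp: split_def intro!: exI[of _ "snd x"])
next
  case (insert x A)
  obtain p q where x: "x = (p, q)" by (cases x)
  obtain \<delta> s where "\<delta> > 0"
    and IH: "\<And>\<alpha>. \<alpha> \<in> {0..\<delta>} \<Longrightarrow> Max ((\<lambda>(p, q). p + q * \<alpha>) ` A) = Max (fst ` A) + \<alpha> * s"
    using insert.IH by blast
  define m where "m = Max (fst ` A)"
  have Max_insert_line: "Max ((\<lambda>(p, q). p + q * \<alpha>) ` insert x A) = max (p + q * \<alpha>) (m + \<alpha> * s)"
    if "\<alpha> \<in> {0..\<delta>}" for \<alpha>
    using insert x IH[OF that] by (simp add: m_def)
  have Max_insert_fst: "Max (fst ` insert x A) = max p m" using insert x by (simp add: m_def)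
  define \<delta>' where "\<delta>' = min \<delta> (\<bar>p - m\<bar> / (\<bar>q - s\<bar> + 1))"
  have small: "\<alpha> * \<bar>q - s\<bar> \<le> \<bar>p - m\<bar>" if "\<alpha> \<in> {0..\<delta>'}" for \<alpha>
  proof -
    have "\<alpha> * (\<bar>q - s\<bar> + 1) \<le> \<bar>p - m\<bar>"
      using that by (simp add: \<delta>'_def le_divide_eq add_pos_nonneg)
    then show ?thesis using that by (simp add: algebra_simps)
  qed
  consider "p \<noteq> m" | "p = m" by blast
  then show ?case
  proof cases
    case 1
    then have "\<delta>' > 0" using \<open>\<delta> > 0\<close> by (simp add: \<delta>'_def)
    moreover have "Max ((\<lambda>(p, q). p + q * \<alpha>) ` insert x A) = Max (fst ` insert x A) + \<alpha> * (if p > m then q else s)"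
      if \<alpha>: "\<alpha> \<in> {0..\<delta>'}" for \<alpha>
    proof -
      have "\<alpha> * (s - q) \<le> \<alpha> * \<bar>q - s\<bar>" "\<alpha> * (q - s) \<le> \<alpha> * \<bar>q - s\<bar>"
        using \<alpha> by (auto intro!: mult_left_mono)
      then show ?thesis
        using small[OF \<alpha>] 1 \<alpha> unfolding Max_insert_fst
        by (subst Max_insert_line) (auto simp: \<delta>'_def max_def algebra_simps)
    qed
    ultimately show ?thesis by blast
  next
    case 2
    have "Max ((\<lambda>(p, q). p + q * \<alpha>) ` insert x A) = Max (fst ` insert x A) + \<alpha> * max q s"
      if \<alpha>: "\<alpha> \<in> {0..\<delta>}" for \<alpha>
      using 2 \<alpha> mult_left_mono[of q s \<alpha>] mult_left_mono[of s q \<alpha>]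
      unfolding Max_insert_line[OF \<alpha>] Max_insert_fst by (auto simp: max_def algebra_simps)
    then show ?thesis using \<open>\<delta> > 0\<close> by blast
  qed
qed

lemma max_affine_ray_eventually_linear:
  assumes "finite C" "C \<noteq> {}"
  obtains \<delta> s where "\<delta> > 0"
    "\<And>\<alpha>. \<alpha> \<in> {0..\<delta>} \<Longrightarrow> max_affine C (x + \<alpha> *\<^sub>R d) = max_affine C x + \<alpha> * s"
proof -
  define A where "A = (\<lambda>(a, b). (a \<bullet> x + b, a \<bullet> d)) ` C"
  have ray: "max_affine C (x + \<alpha> *\<^sub>R d) = Max ((\<lambda>(p, q). p + q * \<alpha>) ` A)" for \<alpha>
    unfolding max_affine_def A_def image_image
    by (intro arg_cong[where f = Max] image_cong) (auto simp: inner_add_right algebra_simps)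
  have base: "max_affine C x = Max (fst ` A)"
    unfolding max_affine_def A_def image_image
    by (intro arg_cong[where f = Max] image_cong) auto
  have "finite A" "A \<noteq> {}" using assms by (auto simp: A_def)
  then obtain \<delta> s where "\<delta> > 0"
    and "\<forall>\<alpha>\<in>{0..\<delta>}. Max ((\<lambda>(p, q). p + q * \<alpha>) ` A) = Max (fst ` A) + \<alpha> * s"
    using Max_affine_eventually_linear by blast
  then show ?thesis using that[of \<delta> s] unfolding ray base by blast
qed

lemma convex_on_ge_initial_slope:
  fixes g :: "'a::real_vector \<Rightarrow> real"
  assumes "convex_on UNIV g" "\<delta> > 0"
    and linear: "\<And>\<alpha>. \<alpha> \<in> {0..\<delta>} \<Longrightarrow> g (x + \<alpha> *\<^sub>R d) = g x + \<alpha> * s"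
    and "\<alpha> \<ge> 0"
  shows "g x + \<alpha> * s \<le> g (x + \<alpha> *\<^sub>R d)"
proof (cases "\<alpha> = 0")
  case False
  with \<open>\<alpha> \<ge> 0\<close> have "\<alpha> > 0" by simp
  define t where "t = min 1 (\<delta> / \<alpha>)"
  have t: "0 < t" "t \<le> 1" "t * \<alpha> \<le> \<delta>"
    using \<open>\<alpha> > 0\<close> \<open>\<delta> > 0\<close> by (auto simp: t_def min_def field_simps)
  have "g x + (t * \<alpha>) * s = g (x + (t * \<alpha>) *\<^sub>R d)"
    using linear[of "t * \<alpha>"] t \<open>\<alpha> > 0\<close> by simp
  also have "x + (t * \<alpha>) *\<^sub>R d = (1 - t) *\<^sub>R x + t *\<^sub>R (x + \<alpha> *\<^sub>R d)"
    by (simp add: algebra_simps)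
  also have "g \<dots> \<le> (1 - t) * g x + t * g (x + \<alpha> *\<^sub>R d)"
    using t by (intro convex_onD[OF assms(1)]) auto
  finally have "t * (\<alpha> * s) \<le> t * (g (x + \<alpha> *\<^sub>R d) - g x)"
    by (simp add: algebra_simps)
  then show ?thesis using t(1) by simp
qed simp

definition ray_deriv :: "(real^'n::finite \<Rightarrow> ereal) \<Rightarrow> real^'n \<Rightarrow> real^'n \<Rightarrow> ereal" where
  "ray_deriv f x d = Lim (at_right 0) (\<lambda>\<alpha>::real. (f (x + \<alpha> *\<^sub>R d) - f x) / ereal \<alpha>)"

lemma dderiv_eq_ray_deriv: "dderiv f x i j = ray_deriv f x (chi i - chi j)"
  by (simp add: dderiv_def ray_deriv_def)

locale max_affine_repr =
  fixes f :: "real^'n::finite \<Rightarrow> ereal" and C0 C1 :: "((real^'n) \<times> real) set"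
  assumes finite_C0: "finite C0" and finite_C1: "finite C1" and C1_nonempty: "C1 \<noteq> {}"
    and f_eq: "\<And>x. f x = (if x \<in> poly_set C0 then ereal (max_affine C1 x) else \<infinity>)"
begin

lemma f_inside: "x \<in> poly_set C0 \<Longrightarrow> f x = ereal (max_affine C1 x)"
  using f_eq by simp

lemma f_outside: "x \<notin> poly_set C0 \<Longrightarrow> f x = \<infinity>"
  using f_eq by simp

lemma f_neq_MInf: "f x \<noteq> -\<infinity>"
  using f_eq[of x] by auto

lemma inside_if_f_eq_ereal: "f x = ereal r \<Longrightarrow> x \<in> poly_set C0"
  using f_outside by force

lemma dom_R_eq: "dom_R f = poly_set C0"
  unfolding dom_R_def using f_eq by auto

lemma ray_deriv_cases:
  assumes x: "x \<in> poly_set C0"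
  obtains (infinite) "ray_deriv f x d = \<infinity>" "\<And>\<alpha>. \<alpha> > 0 \<Longrightarrow> f (x + \<alpha> *\<^sub>R d) = \<infinity>"
    | (finite) s \<delta> where "\<delta> > 0" "ray_deriv f x d = ereal s"
      "\<And>\<alpha>. \<alpha> \<in> {0..\<delta>} \<Longrightarrow> f (x + \<alpha> *\<^sub>R d) = ereal (max_affine C1 x + \<alpha> * s)"
      "\<And>\<alpha>. \<alpha> \<ge> 0 \<Longrightarrow> ereal (max_affine C1 x + \<alpha> * s) \<le> f (x + \<alpha> *\<^sub>R d)"
proof (cases rule: poly_set_ray_cases[OF finite_C0 x, of d, case_names leaves stays])
  case leaves
  then have outside: "\<And>\<alpha>. \<alpha> > 0 \<Longrightarrow> f (x + \<alpha> *\<^sub>R d) = \<infinity>" using f_outside by blast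
  have "eventually (\<lambda>\<alpha>::real. (f (x + \<alpha> *\<^sub>R d) - f x) / ereal \<alpha> = \<infinity>) (at_right 0)"
    unfolding eventually_at_right_field by (rule exI[of _ 1]) (auto simp: outside f_inside[OF x])
  then have "ray_deriv f x d = \<infinity>"
    unfolding ray_deriv_def by (intro tendsto_Lim tendsto_eventually) auto
  show ?thesis using \<open>ray_deriv f x d = \<infinity>\<close> outside by (rule infinite)
next
  case (stays \<delta>1)
  obtain \<delta>2 s where "\<delta>2 > 0"
    and linear: "\<And>\<alpha>. \<alpha> \<in> {0..\<delta>2} \<Longrightarrow> max_affine C1 (x + \<alpha> *\<^sub>R d) = max_affine C1 x + \<alpha> * s"
    using max_affine_ray_eventually_linear[OF finite_C1 C1_nonempty] by blast
  define \<delta> where "\<delta> = min \<delta>1 \<delta>2"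
  have "\<delta> > 0" using stays(1) \<open>\<delta>2 > 0\<close> by (simp add: \<delta>_def)
  have f_linear: "f (x + \<alpha> *\<^sub>R d) = ereal (max_affine C1 x + \<alpha> * s)" if "\<alpha> \<in> {0..\<delta>}" for \<alpha>
    using that stays(2)[of \<alpha>] linear[of \<alpha>] f_inside by (simp add: \<delta>_def)
  have "eventually (\<lambda>\<alpha>::real. (f (x + \<alpha> *\<^sub>R d) - f x) / ereal \<alpha> = ereal s) (at_right 0)"
    unfolding eventually_at_right_field
    using \<open>\<delta> > 0\<close> by (intro exI[of _ \<delta>]) (auto simp: f_linear f_inside[OF x])
  then have "ray_deriv f x d = ereal s"
    unfolding ray_deriv_def by (intro tendsto_Lim tendsto_eventually) auto
  moreover have "ereal (max_affine C1 x + \<alpha> * s) \<le> f (x + \<alpha> *\<^sub>R d)" if "\<alpha> \<ge> 0" for \<alpha>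
    using convex_on_ge_initial_slope[OF convex_on_max_affine[OF finite_C1 C1_nonempty] \<open>\<delta>2 > 0\<close> linear that]
      f_eq[of "x + \<alpha> *\<^sub>R d"] by auto
  ultimately show ?thesis using \<open>\<delta> > 0\<close> f_linear by (intro finite)
qed

lemma ray_deriv_eq_ereal:
  assumes "x \<in> poly_set C0" "ray_deriv f x d = ereal s"
  obtains \<delta> where "\<delta> > 0"
    "\<And>\<alpha>. \<alpha> \<in> {0..\<delta>} \<Longrightarrow> f (x + \<alpha> *\<^sub>R d) = ereal (max_affine C1 x + \<alpha> * s)"
    "\<And>\<alpha>. \<alpha> \<ge> 0 \<Longrightarrow> ereal (max_affine C1 x + \<alpha> * s) \<le> f (x + \<alpha> *\<^sub>R d)"
proof (cases rule: ray_deriv_cases[OF assms(1), of d, case_names infinite finite])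
  case infinite
  then show ?thesis using assms(2) by simp
next
  case (finite s' \<delta>)
  then have "s' = s" using assms(2) by simp
  with finite show ?thesis by (intro that[of \<delta>]) auto
qed

lemma dderiv_neq_MInf: "y \<in> poly_set C0 \<Longrightarrow> dderiv f y a b \<noteq> -\<infinity>"
  unfolding dderiv_eq_ray_deriv by (rule ray_deriv_cases[of y "chi a - chi b"]) auto

lemma dderiv_finite_linear:
  assumes "y \<in> poly_set C0" "dderiv f y a b = ereal s"
  obtains \<delta> where "\<delta> > 0"
    "\<And>\<alpha>. \<alpha> \<in> {0..\<delta>} \<Longrightarrow> f (y + \<alpha> *\<^sub>R (chi a - chi b)) = ereal (max_affine C1 y + \<alpha> * s)"
proof -
  have "ray_deriv f y (chi a - chi b) = ereal s" using assms(2) by (simp add: dderiv_eq_ray_deriv)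
  then show ?thesis by (rule ray_deriv_eq_ereal[OF assms(1)]) (rule that)
qed

lemma dderiv_self:
  assumes "y \<in> poly_set C0"
  shows "dderiv f y a a = 0"
proof -
  have "(\<lambda>\<alpha>::real. (f (y + \<alpha> *\<^sub>R (chi a - chi a)) - f y) / ereal \<alpha>) = (\<lambda>_. 0)"
    using f_inside[OF assms] by simp
  then show ?thesis
    unfolding dderiv_def by (simp add: tendsto_Lim[OF trivial_limit_at_right_real])
qed

definition slopes_above :: "real^'n \<Rightarrow> real \<Rightarrow> bool" where
  "slopes_above y ph \<longleftrightarrow> y \<in> poly_set C0 \<and> (\<forall>k l. ereal ph \<le> dderiv f y k l)"

lemma slopes_above_ray_lower_bound:
  assumes "slopes_above y ph" "\<alpha> \<ge> 0"
  shows "ereal (max_affine C1 y + \<alpha> * ph) \<le> f (y + \<alpha> *\<^sub>R (chi a - chi b))"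
proof -
  have y: "y \<in> poly_set C0" and ph: "ereal ph \<le> ray_deriv f y (chi a - chi b)"
    using assms by (auto simp: slopes_above_def dderiv_eq_ray_deriv)
  show ?thesis
  proof (cases rule: ray_deriv_cases[OF y, of "chi a - chi b", case_names infinite finite])
    case infinite
    then show ?thesis using assms(2) f_inside[OF y] by (cases "\<alpha> = 0") auto
  next
    case (finite s)
    have "max_affine C1 y + \<alpha> * ph \<le> max_affine C1 y + \<alpha> * s"
      using ph finite(2) assms(2) by (simp add: mult_left_mono)
    then show ?thesis using finite(4)[OF assms(2)] by (metis ereal_less_eq(3) order.trans)
  qed
qed

lemma dderiv_gt_if_strictly_above:
  assumes y': "slopes_above y' ph" and "max_affine C1 y' = m + c * ph" and "c > 0"
    and above: "\<And>\<alpha>. 0 < \<alpha> \<Longrightarrow> \<alpha> \<le> c \<Longrightarrow> ereal (m + (c + \<alpha>) * ph) < f (y' + \<alpha> *\<^sub>R (chi r - chi k))"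
  shows "ereal ph < dderiv f y' r k"
proof -
  have y'P: "y' \<in> poly_set C0" and le: "ereal ph \<le> dderiv f y' r k"
    using y' by (auto simp: slopes_above_def)
  have "dderiv f y' r k \<noteq> ereal ph"
  proof
    assume "dderiv f y' r k = ereal ph"
    then obtain \<delta> where "\<delta> > 0"
      and linear: "\<And>\<alpha>. \<alpha> \<in> {0..\<delta>} \<Longrightarrow> f (y' + \<alpha> *\<^sub>R (chi r - chi k)) = ereal (max_affine C1 y' + \<alpha> * ph)"
      using dderiv_finite_linear[OF y'P] by blast
    define \<alpha> where "\<alpha> = min \<delta> c"
    have "0 < \<alpha>" "\<alpha> \<le> c" "\<alpha> \<le> \<delta>" using \<open>\<delta> > 0\<close> \<open>c > 0\<close> by (auto simp: \<alpha>_def)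
    moreover have "f (y' + \<alpha> *\<^sub>R (chi r - chi k)) = ereal (m + (c + \<alpha>) * ph)"
      using linear[of \<alpha>] \<open>0 < \<alpha>\<close> \<open>\<alpha> \<le> \<delta>\<close> assms(2) by (simp add: distrib_right)
    ultimately show False using above[of \<alpha>] by simp
  qed
  with le show ?thesis by simp
qed

end

definition norm1 :: "real^'n::finite \<Rightarrow> real" where
  "norm1 v = (\<Sum>i\<in>UNIV. \<bar>v $ i\<bar>)"

lemma norm1_triangle: "norm1 (u + v) \<le> norm1 u + norm1 v"
  unfolding norm1_def sum.distrib[symmetric] by (intro sum_mono) (simp add: abs_triangle_ineq)

lemma norm1_exchange_le: "norm1 (t *\<^sub>R (chi k - chi l)) \<le> 2 * \<bar>t\<bar>"
proof -
  have "norm1 (t *\<^sub>R (chi k - chi l)) \<le> (\<Sum>i\<in>UNIV. \<bar>t\<bar> * ((if i = k then 1 else 0) + (if i = l then 1 else 0)))"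
    unfolding norm1_def by (intro sum_mono) (auto simp: abs_mult)
  also have "\<dots> = 2 * \<bar>t\<bar>" by (simp add: sum_distrib_left[symmetric] sum.distrib)
  finally show ?thesis .
qed

lemma norm1_two_exchanges_le:
  assumes "c \<ge> 0" "\<alpha> \<ge> 0"
  shows "norm1 (c *\<^sub>R (chi a - chi b) + \<alpha> *\<^sub>R (chi k - chi l)) \<le> 2 * c + 2 * \<alpha>"
  using norm1_triangle[of "c *\<^sub>R (chi a - chi b)" "\<alpha> *\<^sub>R (chi k - chi l)"]
    norm1_exchange_le[of c a b] norm1_exchange_le[of \<alpha> k l] assms
  by simp

lemma sum_UNIV_change_two:
  fixes g h :: "'n::finite \<Rightarrow> real"
  assumes "a \<noteq> b" "\<And>k. k \<noteq> a \<Longrightarrow> k \<noteq> b \<Longrightarrow> g k = h k"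
  shows "sum g UNIV = sum h UNIV + (g a - h a) + (g b - h b)"
proof -
  have split: "sum u UNIV = u a + u b + sum u (UNIV - {a} - {b})" for u :: "'n \<Rightarrow> real"
    using assms(1) by (simp add: sum.remove[of _ a] sum.remove[of _ b])
  have "sum g (UNIV - {a} - {b}) = sum h (UNIV - {a} - {b})"
    using assms(2) by (intro sum.cong) auto
  then show ?thesis using split[of g] split[of h] by simp
qed

lemma norm1_exchange_toward:
  assumes "i \<noteq> j" "0 \<le> \<epsilon>" "\<epsilon> \<le> u $ i" "u $ j \<le> -\<epsilon>"
  shows "norm1 (u - \<epsilon> *\<^sub>R (chi i - chi j)) = norm1 u - 2 * \<epsilon>"
  unfolding norm1_def
  by (subst sum_UNIV_change_two[OF assms(1), where h = "\<lambda>k. \<bar>u $ k\<bar>"]) (use assms in auto)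

lemma norm1_exchange_away:
  assumes "i \<noteq> j" "0 \<le> \<epsilon>" "0 \<le> u $ i" "u $ j \<le> 0"
  shows "norm1 (u + \<epsilon> *\<^sub>R (chi i - chi j)) = norm1 u + 2 * \<epsilon>"
  unfolding norm1_def
  by (subst sum_UNIV_change_two[OF assms(1), where h = "\<lambda>k. \<bar>u $ k\<bar>"]) (use assms in auto)

lemma half_mult_nonpos_mono:
  fixes ph n t :: real
  assumes "n \<le> 2 * t" "ph \<le> 0"
  shows "t * ph \<le> ph * n / 2"
  using mult_left_mono_neg[OF assms] by (simp add: algebra_simps)

locale M_convex_repr = max_affine_repr +
  assumes M_convex: "M_convex f"
begin

lemma M_exchange:
  assumes "x \<in> poly_set C0" "y \<in> poly_set C0" "y $ i < x $ i"
  obtains j \<epsilon>0 where "x $ j < y $ j" "\<epsilon>0 > 0"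
    "\<And>\<epsilon>. \<epsilon> \<in> {0..\<epsilon>0} \<Longrightarrow> f (x - \<epsilon> *\<^sub>R (chi i - chi j)) + f (y + \<epsilon> *\<^sub>R (chi i - chi j)) \<le> f x + f y"
  using M_convex assms unfolding M_convex_def dom_R_eq by blast

lemma exists_coord_gt:
  assumes "x \<in> poly_set C0" "y \<in> poly_set C0" "x \<noteq> y"
  obtains i where "y $ i < x $ i"
proof -
  obtain k where "x $ k \<noteq> y $ k" using assms(3) by (auto simp: vec_eq_iff)
  then consider "y $ k < x $ k" | "x $ k < y $ k" by linarith
  then show ?thesis
  proof cases
    case 2
    then show ?thesis by (rule M_exchange[OF assms(2,1)]) (rule that)
  qed (rule that)
qed

lemma exchange_descent:
  assumes y: "slopes_above y ph" and w: "w \<in> poly_set C0" and wi: "y $ i < w $ i"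
  obtains j \<epsilon> where "i \<noteq> j" "w $ j < y $ j" "0 < \<epsilon>" "\<epsilon> \<le> w $ i - y $ i" "\<epsilon> \<le> y $ j - w $ j"
    "w - \<epsilon> *\<^sub>R (chi i - chi j) \<in> poly_set C0"
    "max_affine C1 (w - \<epsilon> *\<^sub>R (chi i - chi j)) \<le> max_affine C1 w - \<epsilon> * ph"
proof -
  have yP: "y \<in> poly_set C0" using y by (simp add: slopes_above_def)
  obtain j \<epsilon>0 where wj: "w $ j < y $ j" and "\<epsilon>0 > 0"
    and ex: "\<And>\<epsilon>. \<epsilon> \<in> {0..\<epsilon>0} \<Longrightarrow>
      f (w - \<epsilon> *\<^sub>R (chi i - chi j)) + f (y + \<epsilon> *\<^sub>R (chi i - chi j)) \<le> f w + f y"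
    using M_exchange[OF w yP wi] by blast
  have "i \<noteq> j" using wi wj by auto
  define \<epsilon> where "\<epsilon> = min \<epsilon>0 (min (w $ i - y $ i) (y $ j - w $ j))"
  have \<epsilon>: "0 < \<epsilon>" "\<epsilon> \<le> \<epsilon>0" "\<epsilon> \<le> w $ i - y $ i" "\<epsilon> \<le> y $ j - w $ j"
    using \<open>\<epsilon>0 > 0\<close> wi wj by (auto simp: \<epsilon>_def)
  define w' where "w' = w - \<epsilon> *\<^sub>R (chi i - chi j)"
  have sum: "f w' + f (y + \<epsilon> *\<^sub>R (chi i - chi j)) \<le> ereal (max_affine C1 w + max_affine C1 y)"
    using ex[of \<epsilon>] \<epsilon> f_inside[OF w] f_inside[OF yP] by (simp add: w'_def)
  have lower: "ereal (max_affine C1 y + \<epsilon> * ph) \<le> f (y + \<epsilon> *\<^sub>R (chi i - chi j))"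
    using slopes_above_ray_lower_bound[OF y] \<epsilon> by simp
  have "w' \<in> poly_set C0"
  proof (rule ccontr)
    assume "w' \<notin> poly_set C0"
    then show False using sum f_outside[of w'] f_neq_MInf[of "y + \<epsilon> *\<^sub>R (chi i - chi j)"] by simp
  qed
  moreover have "ereal (max_affine C1 w') + ereal (max_affine C1 y + \<epsilon> * ph)
      \<le> ereal (max_affine C1 w + max_affine C1 y)"
    using sum lower f_inside[OF \<open>w' \<in> poly_set C0\<close>] by (metis add_left_mono order.trans)
  then have "max_affine C1 w' \<le> max_affine C1 w - \<epsilon> * ph" by simp
  ultimately show ?thesis using \<open>i \<noteq> j\<close> wj \<epsilon> unfolding w'_def by (intro that)
qed

lemma exchange_step_in_norm1_bound_set:
  assumes y: "slopes_above y ph" and w: "w \<in> poly_set C0" "w \<noteq> y"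
    and box: "\<And>k. min (y $ k) (z $ k) \<le> w $ k \<and> w $ k \<le> max (y $ k) (z $ k)"
    and bound: "max_affine C1 w + ph * norm1 (z - w) / 2 \<le> max_affine C1 z"
  obtains w' where "w' \<in> poly_set C0" "\<And>k. min (y $ k) (z $ k) \<le> w' $ k \<and> w' $ k \<le> max (y $ k) (z $ k)"
    "max_affine C1 w' + ph * norm1 (z - w') / 2 \<le> max_affine C1 z" "norm1 (w' - y) < norm1 (w - y)"
proof -
  have yP: "y \<in> poly_set C0" using y by (simp add: slopes_above_def)
  obtain i where wi: "y $ i < w $ i" using exists_coord_gt[OF w(1) yP w(2)] by blast
  then obtain j \<epsilon> where "i \<noteq> j" "w $ j < y $ j" "0 < \<epsilon>" "\<epsilon> \<le> w $ i - y $ i" "\<epsilon> \<le> y $ j - w $ j"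
    and w'P: "w - \<epsilon> *\<^sub>R (chi i - chi j) \<in> poly_set C0"
    and descent: "max_affine C1 (w - \<epsilon> *\<^sub>R (chi i - chi j)) \<le> max_affine C1 w - \<epsilon> * ph"
    using exchange_descent[OF y w(1)] by blast
  define w' where "w' = w - \<epsilon> *\<^sub>R (chi i - chi j)"
  have "w $ i \<le> z $ i" "z $ j \<le> w $ j" using box[of i] box[of j] wi \<open>w $ j < y $ j\<close> by auto
  then have "norm1 (z - w') = norm1 (z - w) + 2 * \<epsilon>"
    using norm1_exchange_away[OF \<open>i \<noteq> j\<close>, of \<epsilon> "z - w"] \<open>0 < \<epsilon>\<close>
    by (simp add: w'_def algebra_simps)
  then have "max_affine C1 w' + ph * norm1 (z - w') / 2 = max_affine C1 w' + ph * norm1 (z - w) / 2 + \<epsilon> * ph"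
    by (simp add: algebra_simps)
  with descent bound have "max_affine C1 w' + ph * norm1 (z - w') / 2 \<le> max_affine C1 z"
    unfolding w'_def[symmetric] by linarith
  moreover have "min (y $ k) (z $ k) \<le> w' $ k \<and> w' $ k \<le> max (y $ k) (z $ k)" for k
    using box[of k] \<open>0 < \<epsilon>\<close> \<open>\<epsilon> \<le> w $ i - y $ i\<close> \<open>\<epsilon> \<le> y $ j - w $ j\<close> \<open>i \<noteq> j\<close>
    by (auto simp: w'_def)
  moreover have "norm1 (w' - y) = norm1 (w - y) - 2 * \<epsilon>"
    using norm1_exchange_toward[OF \<open>i \<noteq> j\<close>, of \<epsilon> "w - y"] \<open>0 < \<epsilon>\<close>
      \<open>\<epsilon> \<le> w $ i - y $ i\<close> \<open>\<epsilon> \<le> y $ j - w $ j\<close>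
    by (simp add: w'_def algebra_simps)
  ultimately show ?thesis using w'P \<open>0 < \<epsilon>\<close> unfolding w'_def[symmetric] by (intro that) auto
qed

lemma f_ge_norm1_bound:
  assumes y: "slopes_above y ph" and ph: "ph \<le> 0"
  shows "ereal (max_affine C1 y + ph * norm1 (z - y) / 2) \<le> f z"
proof (cases "z \<in> poly_set C0")
  case False
  then show ?thesis using f_outside by simp
next
  case zP: True
  define B where "B = cbox (\<chi> k. min (y $ k) (z $ k)) (\<chi> k. max (y $ k) (z $ k)) \<inter> poly_set C0 \<inter>
    {w. max_affine C1 w + ph * norm1 (z - w) / 2 \<le> max_affine C1 z}"
  have B_iff: "w \<in> B \<longleftrightarrow> w \<in> poly_set C0 \<and> (\<forall>k. min (y $ k) (z $ k) \<le> w $ k \<and> w $ k \<le> max (y $ k) (z $ k))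
      \<and> max_affine C1 w + ph * norm1 (z - w) / 2 \<le> max_affine C1 z" for w
    unfolding B_def by (auto simp: mem_box_cart)
  have "closed B" unfolding B_def norm1_def
    by (intro closed_Int closed_cbox closed_poly_set closed_Collect_le continuous_intros
        continuous_on_max_affine[OF finite_C1 C1_nonempty]) auto
  moreover have "bounded B" unfolding B_def by (rule bounded_subset[OF bounded_cbox]) auto
  ultimately have "compact B" by (simp add: compact_eq_bounded_closed)
  moreover have "z \<in> B" using zP by (simp add: B_iff norm1_def)
  moreover have "continuous_on B (\<lambda>w. norm1 (w - y))" unfolding norm1_def by (intro continuous_intros)
  ultimately obtain w where wB: "w \<in> B" and nearest: "\<And>w'. w' \<in> B \<Longrightarrow> norm1 (w - y) \<le> norm1 (w' - y)"
    using continuous_attains_inf[of B "\<lambda>w. norm1 (w - y)"] by blast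
  have "w = y"
  proof (rule ccontr)
    assume "w \<noteq> y"
    have "w \<in> poly_set C0" and "\<And>k. min (y $ k) (z $ k) \<le> w $ k \<and> w $ k \<le> max (y $ k) (z $ k)"
      and "max_affine C1 w + ph * norm1 (z - w) / 2 \<le> max_affine C1 z"
      using wB by (simp_all add: B_iff)
    then obtain w' where "w' \<in> poly_set C0" "\<And>k. min (y $ k) (z $ k) \<le> w' $ k \<and> w' $ k \<le> max (y $ k) (z $ k)"
      "max_affine C1 w' + ph * norm1 (z - w') / 2 \<le> max_affine C1 z"
      and closer: "norm1 (w' - y) < norm1 (w - y)"
      using exchange_step_in_norm1_bound_set[OF y _ \<open>w \<noteq> y\<close>] by blast
    then have "w' \<in> B" by (simp add: B_iff)
    then show False using nearest[of w'] closer by simp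
  qed
  then show ?thesis using wB f_inside[OF zP] by (simp add: B_iff)
qed


lemma f_gt_norm1_bound:
  assumes y: "slopes_above y ph" and ph: "ph \<le> 0" and za: "y $ a < z $ a" and zb: "z $ b < y $ b"
    and slope: "ereal ph < dderiv f y a b" and "\<epsilon>0 > 0"
    and ex: "\<And>\<epsilon>. \<epsilon> \<in> {0..\<epsilon>0} \<Longrightarrow>
      f (z - \<epsilon> *\<^sub>R (chi a - chi b)) + f (y + \<epsilon> *\<^sub>R (chi a - chi b)) \<le> f z + f y"
  shows "ereal (max_affine C1 y + ph * norm1 (z - y) / 2) < f z"
proof (cases "z \<in> poly_set C0")
  case False
  then show ?thesis using f_outside by simp
next
  case zP: True
  have yP: "y \<in> poly_set C0" using y by (simp add: slopes_above_def)
  have "a \<noteq> b" using za zb by auto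
  have sum: "f z + f y = ereal (max_affine C1 z + max_affine C1 y)"
    using f_inside[OF zP] f_inside[OF yP] by simp
  show ?thesis
  proof (cases rule: ray_deriv_cases[OF yP, of "chi a - chi b", case_names infinite finite])
    case infinite
    then have "f z + f y = \<infinity>"
      using ex[of \<epsilon>0] \<open>\<epsilon>0 > 0\<close> f_neq_MInf[of "z - \<epsilon>0 *\<^sub>R (chi a - chi b)"] by simp
    then show ?thesis using sum by simp
  next
    case (finite s \<delta>)
    have "ph < s" using slope finite(2) by (simp add: dderiv_eq_ray_deriv)
    define \<epsilon> where "\<epsilon> = min \<epsilon>0 (min \<delta> (min (z $ a - y $ a) (y $ b - z $ b)))"
    have \<epsilon>: "0 < \<epsilon>" "\<epsilon> \<le> \<epsilon>0" "\<epsilon> \<le> \<delta>" "\<epsilon> \<le> z $ a - y $ a" "\<epsilon> \<le> y $ b - z $ b"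
      using \<open>\<epsilon>0 > 0\<close> finite(1) za zb by (auto simp: \<epsilon>_def)
    define z' where "z' = z - \<epsilon> *\<^sub>R (chi a - chi b)"
    have exchanged: "f z' + ereal (max_affine C1 y + \<epsilon> * s) \<le> ereal (max_affine C1 z + max_affine C1 y)"
      using ex[of \<epsilon>] \<epsilon> finite(3)[of \<epsilon>] sum by (simp add: z'_def)
    then have z'P: "z' \<in> poly_set C0" using f_outside[of z'] by force
    have "norm1 (z' - y) = norm1 (z - y) - 2 * \<epsilon>"
      using norm1_exchange_toward[OF \<open>a \<noteq> b\<close>, of \<epsilon> "z - y"] \<epsilon> by (simp add: z'_def algebra_simps)
    then have "max_affine C1 y + ph * (norm1 (z - y) - 2 * \<epsilon>) / 2 + (max_affine C1 y + \<epsilon> * s)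
        \<le> max_affine C1 z + max_affine C1 y"
      using exchanged f_ge_norm1_bound[OF y ph, of z'] f_inside[OF z'P] by simp
    then have "max_affine C1 y + ph * norm1 (z - y) / 2 + \<epsilon> * (s - ph) \<le> max_affine C1 z"
      by (simp add: algebra_simps diff_divide_distrib)
    moreover have "\<epsilon> * (s - ph) > 0" using \<epsilon> \<open>ph < s\<close> by simp
    ultimately show ?thesis using f_inside[OF zP] by simp
  qed
qed

lemma slopes_above_transfer:
  assumes y: "slopes_above y ph" and ph: "ph \<le> 0" and y': "y' \<in> poly_set C0"
    and y'_value: "max_affine C1 y' = max_affine C1 y + c * ph" and y'_dist: "norm1 (y' - y) \<le> 2 * c"
  shows "slopes_above y' ph"
  unfolding slopes_above_def
proof (intro conjI allI y')
  fix k l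
  show "ereal ph \<le> dderiv f y' k l"
  proof (cases "dderiv f y' k l")
    case (real s)
    then obtain \<delta> where "\<delta> > 0"
      and linear: "\<And>\<alpha>. \<alpha> \<in> {0..\<delta>} \<Longrightarrow> f (y' + \<alpha> *\<^sub>R (chi k - chi l)) = ereal (max_affine C1 y' + \<alpha> * s)"
      using dderiv_finite_linear[OF y'] by blast
    define z where "z = y' + \<delta> *\<^sub>R (chi k - chi l)"
    have "norm1 (z - y) \<le> 2 * c + 2 * \<delta>"
      using norm1_triangle[of "y' - y" "\<delta> *\<^sub>R (chi k - chi l)"] norm1_exchange_le[of \<delta> k l] y'_dist \<open>\<delta> > 0\<close>
      by (simp add: z_def algebra_simps)
    then have "ph * c + ph * \<delta> \<le> ph * norm1 (z - y) / 2"
      using ph mult_left_mono_neg[of "norm1 (z - y)" "2 * c + 2 * \<delta>" ph] by (simp add: algebra_simps)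
    moreover have "max_affine C1 y + ph * norm1 (z - y) / 2 \<le> max_affine C1 y + c * ph + \<delta> * s"
      using f_ge_norm1_bound[OF y ph, of z] linear[of \<delta>] \<open>\<delta> > 0\<close> y'_value by (simp add: z_def)
    ultimately have "\<delta> * ph \<le> \<delta> * s" by (simp add: algebra_simps)
    then show ?thesis using real \<open>\<delta> > 0\<close> by simp
  qed (use dderiv_neq_MInf[OF y'] in auto)
qed

lemma f_gt_after_exchange_back:
  assumes y: "slopes_above y ph" and "ph < 0" and "0 < \<alpha>" "\<alpha> \<le> c"
  shows "ereal (max_affine C1 y + (c + \<alpha>) * ph) < f (y + c *\<^sub>R (chi a - chi b) + \<alpha> *\<^sub>R (chi b - chi k))"
proof -
  define z where "z = y + c *\<^sub>R (chi a - chi b) + \<alpha> *\<^sub>R (chi b - chi k)"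
  have "z - y = (c - \<alpha>) *\<^sub>R (chi a - chi b) + \<alpha> *\<^sub>R (chi a - chi k)"
    by (simp add: z_def algebra_simps)
  then have "norm1 (z - y) \<le> 2 * c"
    using norm1_two_exchanges_le[of "c - \<alpha>" \<alpha> a b a k] assms(3,4) by simp
  then have "c * ph \<le> ph * norm1 (z - y) / 2"
    by (rule half_mult_nonpos_mono) (use \<open>ph < 0\<close> in simp)
  moreover have "\<alpha> * ph < 0" using \<open>0 < \<alpha>\<close> \<open>ph < 0\<close> by (simp add: mult_pos_neg)
  ultimately have "ereal (max_affine C1 y + (c + \<alpha>) * ph) < ereal (max_affine C1 y + ph * norm1 (z - y) / 2)"
    by (simp add: algebra_simps)
  also have "\<dots> \<le> f z" using f_ge_norm1_bound[OF y] \<open>ph < 0\<close> by simp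
  finally show ?thesis unfolding z_def .
qed

lemma f_gt_after_exchange_other_row:
  assumes y: "slopes_above y ph" and "ph < 0" and "0 \<le> c" "0 < \<alpha>"
    and "r \<noteq> a" "r \<noteq> b" "r \<noteq> k" and row: "\<And>j. ereal ph < dderiv f y r j"
  shows "ereal (max_affine C1 y + (c + \<alpha>) * ph) < f (y + c *\<^sub>R (chi a - chi b) + \<alpha> *\<^sub>R (chi r - chi k))"
proof -
  define z where "z = y + c *\<^sub>R (chi a - chi b) + \<alpha> *\<^sub>R (chi r - chi k)"
  have yP: "y \<in> poly_set C0" using y by (simp add: slopes_above_def)
  have "ereal (max_affine C1 y + ph * norm1 (z - y) / 2) < f z"
  proof (cases "z \<in> poly_set C0")
    case True
    have "y $ r < z $ r" using assms(4-7) by (simp add: z_def)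
    with M_exchange[OF True yP] obtain j \<epsilon>0 where "z $ j < y $ j" "\<epsilon>0 > 0"
      and "\<And>\<epsilon>. \<epsilon> \<in> {0..\<epsilon>0} \<Longrightarrow>
        f (z - \<epsilon> *\<^sub>R (chi r - chi j)) + f (y + \<epsilon> *\<^sub>R (chi r - chi j)) \<le> f z + f y"
      by blast
    with f_gt_norm1_bound[OF y _ \<open>y $ r < z $ r\<close>] row \<open>ph < 0\<close> show ?thesis by simp
  qed (simp add: f_outside)
  moreover have "(c + \<alpha>) * ph \<le> ph * norm1 (z - y) / 2"
    using norm1_two_exchanges_le[of c \<alpha> a b r k] assms(3,4) \<open>ph < 0\<close>
    by (intro half_mult_nonpos_mono) (simp_all add: z_def)
  ultimately show ?thesis unfolding z_def[symmetric]
    by (meson ereal_less_eq(3) add_left_mono order_le_less_trans)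
qed

lemma f_gt_after_exchange_same_row:
  assumes y: "slopes_above y ph" and "ph < 0" and "0 < c" "0 < \<alpha>" "a \<noteq> b"
    and "k \<noteq> a" "k \<noteq> b" and slope: "ereal ph < dderiv f y a k"
  shows "ereal (max_affine C1 y + (c + \<alpha>) * ph) < f (y + c *\<^sub>R (chi a - chi b) + \<alpha> *\<^sub>R (chi a - chi k))"
proof -
  define z where "z = y + c *\<^sub>R (chi a - chi b) + \<alpha> *\<^sub>R (chi a - chi k)"
  have yP: "y \<in> poly_set C0" using y by (simp add: slopes_above_def)
  have "ereal (max_affine C1 y + ph * norm1 (z - y) / 2) < f z"
  proof (cases "z \<in> poly_set C0")
    case True
    have za: "y $ a < z $ a" and zk: "z $ k < y $ k" using assms(3-7) by (simp_all add: z_def)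
    with M_exchange[OF yP True] obtain j \<epsilon>0 where "y $ j < z $ j" "\<epsilon>0 > 0"
      and ex: "\<And>\<epsilon>. \<epsilon> \<in> {0..\<epsilon>0} \<Longrightarrow>
        f (y - \<epsilon> *\<^sub>R (chi k - chi j)) + f (z + \<epsilon> *\<^sub>R (chi k - chi j)) \<le> f y + f z"
      by blast
    \<comment> \<open>a is the only coordinate where z exceeds y\<close>
    have "j = a" using \<open>y $ j < z $ j\<close> assms(3,4) by (auto simp: z_def split: if_splits)
    have "f (z - \<epsilon> *\<^sub>R (chi a - chi k)) + f (y + \<epsilon> *\<^sub>R (chi a - chi k)) \<le> f z + f y"
      if "\<epsilon> \<in> {0..\<epsilon>0}" for \<epsilon>
      using ex[OF that] unfolding \<open>j = a\<close> by (simp add: algebra_simps add.commute)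
    with f_gt_norm1_bound[OF y _ za zk slope \<open>\<epsilon>0 > 0\<close>] \<open>ph < 0\<close> show ?thesis by simp
  qed (simp add: f_outside)
  moreover have "(c + \<alpha>) * ph \<le> ph * norm1 (z - y) / 2"
    using norm1_two_exchanges_le[of c \<alpha> a b a k] assms(3,4) \<open>ph < 0\<close>
    by (intro half_mult_nonpos_mono) (simp_all add: z_def)
  ultimately show ?thesis unfolding z_def[symmetric]
    by (meson ereal_less_eq(3) add_left_mono order_le_less_trans)
qed

end

locale bounded_M_convex_repr = M_convex_repr +
  assumes bounded_dom: "bounded (poly_set C0)"
begin

lemma compact_linear_piece:
  assumes y: "y \<in> poly_set C0" and "e \<noteq> 0"
    and lower: "\<And>\<alpha>. \<alpha> \<ge> 0 \<Longrightarrow> ereal (max_affine C1 y + \<alpha> * s) \<le> f (y + \<alpha> *\<^sub>R e)"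
  shows "compact {l. 0 \<le> l \<and> f (y + l *\<^sub>R e) = ereal (max_affine C1 y + l * s)}" (is "compact ?S")
proof -
  have "?S = {0..} \<inter> (\<lambda>l. y + l *\<^sub>R e) -` poly_set C0 \<inter>
      {l. max_affine C1 (y + l *\<^sub>R e) \<le> max_affine C1 y + l * s}"
  proof (intro equalityI subsetI)
    fix l assume "l \<in> ?S"
    then show "l \<in> {0..} \<inter> (\<lambda>l. y + l *\<^sub>R e) -` poly_set C0 \<inter>
        {l. max_affine C1 (y + l *\<^sub>R e) \<le> max_affine C1 y + l * s}"
      using f_eq[of "y + l *\<^sub>R e"] by (auto split: if_splits)
  next
    fix l assume "l \<in> {0..} \<inter> (\<lambda>l. y + l *\<^sub>R e) -` poly_set C0 \<inter>
        {l. max_affine C1 (y + l *\<^sub>R e) \<le> max_affine C1 y + l * s}"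
    then show "l \<in> ?S" using lower[of l] f_inside[of "y + l *\<^sub>R e"] by auto
  qed
  moreover have "closed \<dots>"
    by (intro closed_Int closed_atLeast closed_vimage closed_poly_set closed_Collect_le continuous_intros
        continuous_on_max_affine[OF finite_C1 C1_nonempty])
  moreover have "bounded ?S"
  proof -
    obtain K where K: "\<And>x. x \<in> poly_set C0 \<Longrightarrow> norm x \<le> K" using bounded_dom unfolding bounded_iff by blast
    have "\<bar>l\<bar> \<le> (K + norm y) / norm e" if "l \<in> ?S" for l
    proof -
      have "y + l *\<^sub>R e \<in> poly_set C0" using that f_outside by force
      have "\<bar>l\<bar> * norm e = norm ((y + l *\<^sub>R e) - y)" by simp
      also have "\<dots> \<le> norm (y + l *\<^sub>R e) + norm y" by (rule norm_triangle_ineq4)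
      also have "\<dots> \<le> K + norm y" using K[OF \<open>y + l *\<^sub>R e \<in> poly_set C0\<close>] by simp
      finally have "\<bar>l\<bar> * norm e \<le> K + norm y" .
      then show ?thesis using \<open>e \<noteq> 0\<close> by (simp add: le_divide_eq)
    qed
    then show ?thesis unfolding bounded_iff by auto
  qed
  ultimately show ?thesis by (simp add: compact_eq_bounded_closed)
qed

lemma cbar_greatest:
  assumes y: "y \<in> poly_set C0" and "a \<noteq> b" and slope: "dderiv f y a b = ereal s"
  shows "0 < cbar f y a b"
    and "f (y + cbar f y a b *\<^sub>R (chi a - chi b)) = ereal (max_affine C1 y + cbar f y a b * s)"
    and "\<And>l. 0 \<le> l \<Longrightarrow> f (y + l *\<^sub>R (chi a - chi b)) = ereal (max_affine C1 y + l * s) \<Longrightarrow> l \<le> cbar f y a b"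
proof -
  define e where "e = chi a - chi b"
  have "e \<noteq> 0" using \<open>a \<noteq> b\<close> by (auto simp: e_def vec_eq_iff)
  have "ray_deriv f y e = ereal s" using slope by (simp add: e_def dderiv_eq_ray_deriv)
  obtain \<delta> where "\<delta> > 0"
    and linear: "\<And>\<alpha>. \<alpha> \<in> {0..\<delta>} \<Longrightarrow> f (y + \<alpha> *\<^sub>R e) = ereal (max_affine C1 y + \<alpha> * s)"
    and lower: "\<And>\<alpha>. \<alpha> \<ge> 0 \<Longrightarrow> ereal (max_affine C1 y + \<alpha> * s) \<le> f (y + \<alpha> *\<^sub>R e)"
    using ray_deriv_eq_ereal[OF y \<open>ray_deriv f y e = ereal s\<close>] by blast
  define S where "S = {l. 0 \<le> l \<and> f (y + l *\<^sub>R e) = ereal (max_affine C1 y + l * s)}"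
  have "\<delta> \<in> S" using linear[of \<delta>] \<open>\<delta> > 0\<close> by (simp add: S_def)
  then obtain c where "c \<in> S" and c_max: "\<And>l. l \<in> S \<Longrightarrow> l \<le> c"
    using compact_attains_sup[OF compact_linear_piece[OF y \<open>e \<noteq> 0\<close> lower]] unfolding S_def by blast
  have on_piece: "f (y + l *\<^sub>R e) - f y = ereal l * dderiv f y a b \<longleftrightarrow>
      f (y + l *\<^sub>R e) = ereal (max_affine C1 y + l * s)" for l
    using f_inside[OF y] slope f_neq_MInf[of "y + l *\<^sub>R e"]
    by (cases "f (y + l *\<^sub>R e)") (auto simp: algebra_simps)
  have "cbar f y a b = (GREATEST l. l \<in> S)"
    unfolding cbar_def e_def[symmetric] S_def by (simp only: on_piece mem_Collect_eq)
  also have "\<dots> = c" by (rule Greatest_equality) (use \<open>c \<in> S\<close> c_max in auto)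
  finally have "cbar f y a b = c" .
  then show "0 < cbar f y a b"
    and "f (y + cbar f y a b *\<^sub>R (chi a - chi b)) = ereal (max_affine C1 y + cbar f y a b * s)"
    and "\<And>l. 0 \<le> l \<Longrightarrow> f (y + l *\<^sub>R (chi a - chi b)) = ereal (max_affine C1 y + l * s) \<Longrightarrow> l \<le> cbar f y a b"
    using c_max[OF \<open>\<delta> \<in> S\<close>] \<open>\<delta> > 0\<close> \<open>c \<in> S\<close> c_max unfolding S_def e_def by auto
qed

lemma min_slope_step:
  assumes y: "slopes_above y ph" and ph: "ph < 0" and slope: "dderiv f y a b = ereal ph"
  defines "y' \<equiv> y + cbar f y a b *\<^sub>R (chi a - chi b)"
  shows "a \<noteq> b" and "0 < cbar f y a b" and "max_affine C1 y' = max_affine C1 y + cbar f y a b * ph"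
    and "slopes_above y' ph" and "ereal ph < dderiv f y' a b"
proof -
  have yP: "y \<in> poly_set C0" using y by (simp add: slopes_above_def)
  show "a \<noteq> b" using dderiv_self[OF yP, of a] slope ph by auto
  define c where "c = cbar f y a b"
  have "0 < c" and f_y': "f y' = ereal (max_affine C1 y + c * ph)"
    and c_max: "\<And>l. 0 \<le> l \<Longrightarrow> f (y + l *\<^sub>R (chi a - chi b)) = ereal (max_affine C1 y + l * ph) \<Longrightarrow> l \<le> c"
    using cbar_greatest[OF yP \<open>a \<noteq> b\<close> slope] unfolding c_def y'_def by auto
  then show "0 < cbar f y a b" by (simp add: c_def)
  have y'P: "y' \<in> poly_set C0" using f_y' by (rule inside_if_f_eq_ereal)
  have y'_value: "max_affine C1 y' = max_affine C1 y + c * ph" using f_y' f_inside[OF y'P] by simp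
  then show "max_affine C1 y' = max_affine C1 y + cbar f y a b * ph" by (simp add: c_def)
  have "norm1 (y' - y) \<le> 2 * c" using norm1_exchange_le[of c a b] \<open>0 < c\<close> by (simp add: y'_def c_def)
  then show y': "slopes_above y' ph"
    by (rule slopes_above_transfer[OF y less_imp_le[OF ph] y'P y'_value])
  show "ereal ph < dderiv f y' a b"
  proof (rule dderiv_gt_if_strictly_above[OF y' y'_value \<open>0 < c\<close>])
    fix \<alpha> :: real assume "0 < \<alpha>" "\<alpha> \<le> c"
    have "y' + \<alpha> *\<^sub>R (chi a - chi b) = y + (c + \<alpha>) *\<^sub>R (chi a - chi b)"
      by (simp add: y'_def c_def algebra_simps)
    moreover have "ereal (max_affine C1 y + (c + \<alpha>) * ph) \<le> f (y + (c + \<alpha>) *\<^sub>R (chi a - chi b))"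
      using slopes_above_ray_lower_bound[OF y] \<open>0 < c\<close> \<open>0 < \<alpha>\<close> by simp
    moreover have "f (y + (c + \<alpha>) *\<^sub>R (chi a - chi b)) \<noteq> ereal (max_affine C1 y + (c + \<alpha>) * ph)"
      using c_max[of "c + \<alpha>"] \<open>0 < c\<close> \<open>0 < \<alpha>\<close> by force
    ultimately show "ereal (max_affine C1 y + (c + \<alpha>) * ph) < f (y' + \<alpha> *\<^sub>R (chi a - chi b))"
      by simp
  qed
qed

lemma finished_row_stays_above:
  assumes y: "slopes_above y ph" and ph: "ph < 0" and slope: "dderiv f y i j = ereal ph"
    and "r \<noteq> i" and row: "\<And>k. ereal ph < dderiv f y r k"
  defines "y' \<equiv> y + cbar f y i j *\<^sub>R (chi i - chi j)"
  shows "ereal ph < dderiv f y' r k"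
proof -
  define c where "c = cbar f y i j"
  have y'_eq: "y' = y + c *\<^sub>R (chi i - chi j)" by (simp add: y'_def c_def)
  have "0 < c" and y'_value: "max_affine C1 y' = max_affine C1 y + c * ph"
    and y': "slopes_above y' ph"
    using min_slope_step[OF y ph slope] unfolding c_def[symmetric] y'_eq[symmetric] by auto
  show ?thesis
  proof (cases "k = r")
    case True
    then show ?thesis using dderiv_self y' ph by (simp add: slopes_above_def)
  next
    case False
    show ?thesis
    proof (rule dderiv_gt_if_strictly_above[OF y' y'_value \<open>0 < c\<close>])
      fix \<alpha> :: real assume "0 < \<alpha>" "\<alpha> \<le> c"
      then show "ereal (max_affine C1 y + (c + \<alpha>) * ph) < f (y' + \<alpha> *\<^sub>R (chi r - chi k))"
        unfolding y'_eq using \<open>r \<noteq> i\<close> False row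
          f_gt_after_exchange_back[OF y ph] f_gt_after_exchange_other_row[OF y ph, of c \<alpha> r i j k]
        by (cases "r = j") auto
    qed
  qed
qed

lemma current_row_stays_above:
  assumes y: "slopes_above y ph" and ph: "ph < 0" and slope: "dderiv f y i j = ereal ph"
    and "k \<noteq> j" and "ereal ph < dderiv f y i k"
  defines "y' \<equiv> y + cbar f y i j *\<^sub>R (chi i - chi j)"
  shows "ereal ph < dderiv f y' i k"
proof -
  define c where "c = cbar f y i j"
  have y'_eq: "y' = y + c *\<^sub>R (chi i - chi j)" by (simp add: y'_def c_def)
  have "i \<noteq> j" "0 < c" and y'_value: "max_affine C1 y' = max_affine C1 y + c * ph"
    and y': "slopes_above y' ph"
    using min_slope_step[OF y ph slope] unfolding c_def[symmetric] y'_eq[symmetric] by auto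
  show ?thesis
  proof (cases "k = i")
    case True
    then show ?thesis using dderiv_self y' ph by (simp add: slopes_above_def)
  next
    case False
    show ?thesis
    proof (rule dderiv_gt_if_strictly_above[OF y' y'_value \<open>0 < c\<close>])
      fix \<alpha> :: real assume "0 < \<alpha>" "\<alpha> \<le> c"
      then show "ereal (max_affine C1 y + (c + \<alpha>) * ph) < f (y' + \<alpha> *\<^sub>R (chi i - chi k))"
        unfolding y'_eq using f_gt_after_exchange_same_row[OF y ph \<open>0 < c\<close> _ \<open>i \<noteq> j\<close> False] assms(4,5)
        by simp
    qed
  qed
qed

lemma pm_step_invariant:
  fixes j
  assumes y: "slopes_above y ph" and ph: "ph < 0"
    and rows: "\<forall>r\<in>R. \<forall>k. ereal ph < dderiv f y r k" and "i \<notin> R"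
    and cols: "\<forall>k\<in>P. ereal ph < dderiv f y i k"
  defines "y' \<equiv> pm_step f (ereal ph) y (i, j)"
  shows "slopes_above y' ph \<and> (\<forall>r\<in>R. \<forall>k. ereal ph < dderiv f y' r k) \<and>
    (\<forall>k\<in>insert j P. ereal ph < dderiv f y' i k)"
proof (cases "dderiv f y i j = ereal ph")
  case False
  then have "y' = y" by (simp add: y'_def pm_step_def)
  moreover have "ereal ph < dderiv f y i j" using False y by (auto simp: slopes_above_def order_less_le)
  ultimately show ?thesis using y rows cols by auto
next
  case slope: True
  then have y'_eq: "y' = y + cbar f y i j *\<^sub>R (chi i - chi j)" by (simp add: y'_def pm_step_def)
  have "\<forall>r\<in>R. \<forall>k. ereal ph < dderiv f y' r k"
    using rows \<open>i \<notin> R\<close> by (auto intro!: finished_row_stays_above[OF y ph slope, folded y'_eq])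
  moreover have "ereal ph < dderiv f y' i k" if "k \<in> insert j P" for k
  proof (cases "k = j")
    case True
    then show ?thesis using min_slope_step(5)[OF y ph slope, folded y'_eq] by simp
  next
    case False
    then show ?thesis using that cols current_row_stays_above[OF y ph slope, folded y'_eq] by auto
  qed
  ultimately show ?thesis using min_slope_step(4)[OF y ph slope, folded y'_eq] by blast
qed

lemma foldl_pm_step_row:
  fixes js
  assumes "slopes_above y ph" "ph < 0" "\<forall>r\<in>R. \<forall>k. ereal ph < dderiv f y r k" "i \<notin> R"
    "\<forall>k\<in>P. ereal ph < dderiv f y i k"
  defines "y' \<equiv> foldl (pm_step f (ereal ph)) y (map (\<lambda>j. (i, j)) js)"
  shows "slopes_above y' ph \<and> (\<forall>r\<in>R. \<forall>k. ereal ph < dderiv f y' r k) \<and>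
    (\<forall>k\<in>P \<union> set js. ereal ph < dderiv f y' i k)"
  using assms(1-5) unfolding y'_def
proof (induction js arbitrary: y P)
  case (Cons j js)
  from pm_step_invariant[OF Cons.prems(1-5), of j] show ?case
    using Cons.IH[of "pm_step f (ereal ph) y (i, j)" "insert j P"] Cons.prems(2,4) by auto
qed simp

lemma foldl_pm_step_rows:
  assumes "slopes_above y ph" "ph < 0" "\<forall>r\<in>R. \<forall>k. ereal ph < dderiv f y r k" "set ois \<inter> R = {}"
    "distinct ois" "\<And>i. set (js i) = UNIV - {i}"
  defines "y' \<equiv> foldl (pm_step f (ereal ph)) y (concat (map (\<lambda>i. map (\<lambda>j. (i, j)) (js i)) ois))"
  shows "slopes_above y' ph \<and> (\<forall>r\<in>R \<union> set ois. \<forall>k. ereal ph < dderiv f y' r k)"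
  using assms(1-6) unfolding y'_def
proof (induction ois arbitrary: y R)
  case (Cons i ois)
  define y1 where "y1 = foldl (pm_step f (ereal ph)) y (map (\<lambda>j. (i, j)) (js i))"
  have "i \<notin> R" using Cons.prems(4) by auto
  then have y1: "slopes_above y1 ph" and "\<forall>r\<in>R. \<forall>k. ereal ph < dderiv f y1 r k"
    and "\<forall>k\<in>set (js i). ereal ph < dderiv f y1 i k"
    using foldl_pm_step_row[OF Cons.prems(1-3), of i "{}" "js i"] unfolding y1_def by auto
  moreover have "ereal ph < dderiv f y1 i i"
    using dderiv_self y1 Cons.prems(2) by (simp add: slopes_above_def)
  ultimately have rows: "\<forall>r\<in>insert i R. \<forall>k. ereal ph < dderiv f y1 r k"
    using Cons.prems(6)[of i] by (metis Diff_iff insertE singletonD UNIV_I)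
  have "set ois \<inter> insert i R = {}" using Cons.prems(4,5) by auto
  from Cons.IH[OF y1 Cons.prems(2) rows this _ Cons.prems(6)] Cons.prems(5)
  show ?case by (simp add: y1_def foldl_append)
qed simp

end

lemma dderiv_range: "{dderiv f y i j | i j. True} = (\<lambda>(i, j). dderiv f y i j) ` UNIV"
  by auto

lemma phi_le_dderiv: "phi f y \<le> dderiv f y i j"
  unfolding phi_def dderiv_range by (rule Min_le) auto

lemma phi_attained:
  obtains i j where "phi f y = dderiv f y i j"
proof -
  have "phi f y \<in> (\<lambda>(i, j). dderiv f y i j) ` UNIV"
    unfolding phi_def dderiv_range by (rule Min_in) auto
  then show ?thesis using that by auto
qed

lemma less_phi_iff: "t < phi f y \<longleftrightarrow> (\<forall>i j. t < dderiv f y i j)"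
  unfolding phi_def dderiv_range by (subst Min_gr_iff) auto

theorem mainTheorem17:
  fixes f :: "real^'n::finite \<Rightarrow> ereal" and x :: "real^'n"
    and ois :: "'n list" and js :: "'n \<Rightarrow> 'n list"
  assumes "M_convex f"
    and "bounded (dom_R f)"
    and "x \<in> dom_R f"
    and "phi f x < 0"
    and "distinct ois" and "set ois = UNIV"
    and "\<And>i. distinct (js i) \<and> set (js i) = UNIV - {i}"
  shows "phi f (pm_incslope f ois js x) > phi f x"
proof -
  have "polyhedral_convex f" using assms(1) by (simp add: M_convex_def)
  then obtain C0 C1 where repr: "finite C0" "finite C1" "C1 \<noteq> {}"
    "\<And>x. f x = (if x \<in> poly_set C0 then ereal (max_affine C1 x) else \<infinity>)"
    using polyhedral_convex_max_affine_repr by blast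
  then interpret max_affine_repr f C0 C1 by unfold_locales
  have "bounded (poly_set C0)" using assms(2) dom_R_eq by simp
  then interpret bounded_M_convex_repr f C0 C1
    using repr assms(1) by (unfold_locales; auto)
  have xP: "x \<in> poly_set C0" using assms(3) dom_R_eq by simp
  obtain i j where "phi f x = dderiv f x i j" by (rule phi_attained)
  then have "phi f x \<noteq> -\<infinity>" "phi f x \<noteq> \<infinity>" using dderiv_neq_MInf[OF xP] assms(4) by auto
  then obtain ph where ph: "phi f x = ereal ph" by (cases "phi f x") auto
  then have "ph < 0" using assms(4) by simp
  have "slopes_above x ph"
    unfolding slopes_above_def using xP phi_le_dderiv[of f x] unfolding ph by simp
  then have "\<forall>r\<in>set ois. \<forall>k. ereal ph < dderiv f (pm_incslope f ois js x) r k"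
    using foldl_pm_step_rows[of x ph "{}" ois js] \<open>ph < 0\<close> assms(5,7) ph unfolding pm_incslope_def by auto
  then show ?thesis using assms(6) ph by (simp add: less_phi_iff)
qed

end
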